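(* Let $X_1,\dots,X_n$ be independent random variables with $X_i\sim\mathrm{Bernoulli}(p_i)$, $p_i\in[0,1)$, let $S_n=\sum_{i=1}^n X_i$ and suppose $\lambda=E(S_n)=\sum_{i=1}^n p_i>0$. Then $$D(P_{S_n}\,\|\,\mathrm{Po}(\lambda))\le \frac{1}{\lambda}\sum_{i=1}^n\frac{p_i^3}{1-p_i}.$$
   Context: $P_{S_n}$ is the distribution of $S_n$; $\mathrm{Po}(\lambda)$ is the Poisson distribution with mean $\lambda$. $D(P\|Q)=\sum_x P(x)\log\frac{P(x)}{Q(x)}$ is the relative entropy (natural logarithm, with conventions $0\log(0/a)=0$, $a\log(a/0)=\infty$ for $a>0$). *)

theory Defs
  imports "HOL-Probability.Probability"
begin

definition rel_entropy :: "'a pmf \<Rightarrow> 'a pmf \<Rightarrow> ereal" where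
  "rel_entropy P Q =
     (if \<exists>x. pmf P x > 0 \<and> pmf Q x = 0 then \<infinity>
      else ereal (\<Sum>\<^sub>\<infinity>x\<in>set_pmf P. pmf P x * ln (pmf P x / pmf Q x)))"

definition bernoulli_sum_pmf :: "nat \<Rightarrow> (nat \<Rightarrow> real) \<Rightarrow> nat pmf" where
  "bernoulli_sum_pmf n p =
     map_pmf (\<lambda>X. \<Sum>i<n. of_bool (X i)) (Pi_pmf {..<n} False (\<lambda>i. bernoulli_pmf (p i)))"

end

theory Submission
  imports Defs
begin

text \<open>The relative entropy from Po\<open>(\<lambda>)\<close> is bounded by the scaled Fisher information
  \<open>K = \<lambda> E[\<rho>(X)\<^sup>2]\<close>, \<open>\<rho>(x) = (x + 1) P(x + 1) / (\<lambda> P(x)) - 1\<close>. This log-Sobolev inequality for the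
  Poisson law is the limit \<open>k \<rightarrow> \<infinity>\<close> of the one for Binomial\<open>(k, \<lambda> / k)\<close>, which follows by induction
  on \<open>k\<close> from the chain rule for relative entropy, the log-sum inequality, and the bound of a
  two-point relative entropy by the \<open>\<chi>\<^sup>2\<close>-distance. Finally \<open>\<lambda> K(S\<^sub>n) \<le> \<Sum> p\<^sub>i\<^sup>3 / (1 - p\<^sub>i)\<close>,
  because each new independent Bernoulli\<open>(p)\<close> summand raises \<open>\<lambda> K\<close> by at most \<open>p\<^sup>3 / (1 - p)\<close>.\<close>

section \<open>Log-sum inequality and two-point divergence\<close>

lemma log_sum_inequality:
  fixes a b :: "'a \<Rightarrow> real"
  assumes "finite T" and a: "\<And>t. t \<in> T \<Longrightarrow> a t \<ge> 0" and b: "\<And>t. t \<in> T \<Longrightarrow> b t \<ge> 0"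
    and ab: "\<And>t. t \<in> T \<Longrightarrow> a t > 0 \<Longrightarrow> b t > 0"
  shows "(\<Sum>t\<in>T. a t) * ln ((\<Sum>t\<in>T. a t) / (\<Sum>t\<in>T. b t)) \<le> (\<Sum>t\<in>T. a t * ln (a t / b t))"
proof (cases "\<exists>t\<in>T. a t > 0")
  case False
  then have "a t = 0" if "t \<in> T" for t
    using a that by force
  then show ?thesis by simp
next
  case True
  define A B where "A = (\<Sum>t\<in>T. a t)" and "B = (\<Sum>t\<in>T. b t)"
  obtain s where s: "s \<in> T" "a s > 0" using True by blast
  have "a s \<le> A" "b s \<le> B"
    unfolding A_def B_def using s a b \<open>finite T\<close> by (auto intro: member_le_sum)
  then have A: "A > 0" and B: "B > 0" using s ab[of s] by auto
  have tangent: "a t * ln (A / B) + a t - b t * (A / B) \<le> a t * ln (a t / b t)" if "t \<in> T" for t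
  proof (cases "a t = 0")
    case False
    then have at: "a t > 0" and bt: "b t > 0" using a ab that by force+
    have "ln (b t * A / (a t * B)) \<le> b t * A / (a t * B) - 1"
      using at bt A B by (intro ln_le_minus_one) simp
    moreover have "ln (b t * A / (a t * B)) = ln (A / B) - ln (a t / b t)"
      using at bt A B by (simp add: ln_div ln_mult)
    ultimately have "a t * (ln (A / B) + 1 - b t * A / (a t * B)) \<le> a t * ln (a t / b t)"
      using at by (intro mult_left_mono) auto
    moreover have "a t * (ln (A / B) + 1 - b t * A / (a t * B)) = a t * ln (A / B) + a t - b t * (A / B)"
      using at by (simp add: field_simps)
    ultimately show ?thesis by simp
  qed (use that b A B in simp)
  have "A * ln (A / B) = A * ln (A / B) + A - B * (A / B)"
    using B by simp
  also have "\<dots> = (\<Sum>t\<in>T. a t * ln (A / B) + a t - b t * (A / B))"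
    unfolding A_def B_def by (simp add: sum.distrib sum_subtractf sum_distrib_right sum_divide_distrib)
  also have "\<dots> \<le> (\<Sum>t\<in>T. a t * ln (a t / b t))"
    by (rule sum_mono) (rule tangent)
  finally show ?thesis
    unfolding A_def B_def .
qed

text \<open>\<open>bern_div p a b\<close> is \<open>(a + b)\<close> times the relative entropy of Bernoulli\<open>(b / (a + b))\<close>
  from Bernoulli\<open>(p)\<close>.\<close>
definition bern_div :: "real \<Rightarrow> real \<Rightarrow> real \<Rightarrow> real" where
  "bern_div p a b = a * ln (a / ((1 - p) * (a + b))) + b * ln (b / (p * (a + b)))"

lemma bern_div_scale:
  assumes "c \<ge> 0"
  shows "bern_div p (c * a) (c * b) = c * bern_div p a b"
proof (cases "c = 0")
  case False
  have "c * a / ((1 - p) * (c * a + c * b)) = a / ((1 - p) * (a + b))"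
    "c * b / (p * (c * a + c * b)) = b / (p * (a + b))"
    using False by (simp_all add: distrib_left[symmetric] mult.left_commute[of _ c])
  then show ?thesis
    unfolding bern_div_def by (simp add: algebra_simps)
qed (simp add: bern_div_def)

lemma bern_div_sum_le:
  assumes p: "0 < p" "p < 1" and "finite T"
    and a: "\<And>t. t \<in> T \<Longrightarrow> a t \<ge> 0" and b: "\<And>t. t \<in> T \<Longrightarrow> b t \<ge> 0"
  shows "bern_div p (\<Sum>t\<in>T. a t) (\<Sum>t\<in>T. b t) \<le> (\<Sum>t\<in>T. bern_div p (a t) (b t))"
proof -
  have "(\<Sum>t\<in>T. a t) * ln ((\<Sum>t\<in>T. a t) / (\<Sum>t\<in>T. (1 - p) * (a t + b t)))
      \<le> (\<Sum>t\<in>T. a t * ln (a t / ((1 - p) * (a t + b t))))"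
    using p a b by (intro log_sum_inequality \<open>finite T\<close>) (auto intro!: mult_pos_pos add_pos_nonneg)
  moreover have "(\<Sum>t\<in>T. b t) * ln ((\<Sum>t\<in>T. b t) / (\<Sum>t\<in>T. p * (a t + b t)))
      \<le> (\<Sum>t\<in>T. b t * ln (b t / (p * (a t + b t))))"
    using p a b by (intro log_sum_inequality \<open>finite T\<close>) (auto intro!: mult_pos_pos add_nonneg_pos)
  ultimately show ?thesis
    by (simp add: bern_div_def sum.distrib sum_distrib_left[symmetric])
qed

lemma bern_div_le_chi_square:
  assumes p: "0 < p" "p < 1" and "a \<ge> 0" "b \<ge> 0"
  shows "bern_div p a b \<le> (b * (1 - p) - a * p)^2 / ((a + b) * p * (1 - p))"
proof (cases "a + b = 0")
  case True
  then have "a = 0" "b = 0" using assms by auto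
  then show ?thesis by (simp add: bern_div_def)
next
  case False
  then have s: "a + b > 0" using assms by auto
  have xlnx_le: "x * ln (x / y) \<le> x * (x / y - 1)" if "x \<ge> 0" "y > 0" for x y :: real
    using that ln_le_minus_one[of "x / y"] by (cases "x = 0") (auto intro: mult_left_mono)
  have "bern_div p a b \<le> a * (a / ((1 - p) * (a + b)) - 1) + b * (b / (p * (a + b)) - 1)"
    unfolding bern_div_def using assms s by (intro add_mono xlnx_le) auto
  also have "\<dots> = (a^2 * p + b^2 * (1 - p) - (a + b)^2 * p * (1 - p)) / ((a + b) * p * (1 - p))"
  proof -
    have "x * (x / (q * s) - 1) + y * (y / (p * s) - 1) = (x^2 * p + y^2 * q - s * (x + y) * p * q) / (s * p * q)"
      if "q > 0" "s > 0" for x y q s :: real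
      using that p by (simp add: field_simps power2_eq_square)
    from this[of "1 - p" "a + b" a b] show ?thesis
      using p s by (simp add: power2_eq_square mult.commute)
  qed
  also have "a^2 * p + b^2 * (1 - p) - (a + b)^2 * p * (1 - p) = (b * (1 - p) - a * p)^2"
    by (simp add: power2_eq_square algebra_simps)
  finally show ?thesis .
qed

section \<open>Log-Sobolev inequality for the binomial law\<close>

definition binomial_prob :: "nat \<Rightarrow> real \<Rightarrow> nat \<Rightarrow> real" where
  "binomial_prob k p x = real (k choose x) * p ^ x * (1 - p) ^ (k - x)"

lemma binomial_prob_pos: "0 < p \<Longrightarrow> p < 1 \<Longrightarrow> x \<le> k \<Longrightarrow> binomial_prob k p x > 0"
  unfolding binomial_prob_def by (intro mult_pos_pos) auto

lemma binomial_prob_Suc_fail: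
  assumes "x \<le> k"
  shows "real (Suc k - x) * binomial_prob (Suc k) p x = real (Suc k) * (1 - p) * binomial_prob k p x"
proof -
  have c: "real (Suc k - x) * real (Suc k choose x) = real (Suc k) * real (k choose x)"
    using binomial_absorb_comp[of "Suc k" x] by (metis diff_Suc_1 of_nat_mult)
  have "Suc k - x = Suc (k - x)"
    using assms by simp
  then have "real (Suc k - x) * binomial_prob (Suc k) p x
      = (real (Suc k - x) * real (Suc k choose x)) * (p ^ x * (1 - p) ^ Suc (k - x))"
    unfolding binomial_prob_def by (simp only: mult_ac)
  also have "\<dots> = real (Suc k) * (1 - p) * binomial_prob k p x"
    unfolding c binomial_prob_def by (simp add: mult_ac)
  finally show ?thesis .
qed

lemma binomial_prob_Suc_success:
  "real (Suc x) * binomial_prob (Suc k) p (Suc x) = real (Suc k) * p * binomial_prob k p x"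
proof -
  have c: "real (Suc x) * real (Suc k choose Suc x) = real (Suc k) * real (k choose x)"
    using Suc_times_binomial[of x k] by (metis of_nat_mult)
  have "real (Suc x) * binomial_prob (Suc k) p (Suc x)
      = (real (Suc x) * real (Suc k choose Suc x)) * (p ^ Suc x * (1 - p) ^ (k - x))"
    unfolding binomial_prob_def by (simp only: mult_ac diff_Suc_Suc)
  also have "\<dots> = real (Suc k) * p * binomial_prob k p x"
    unfolding c binomial_prob_def by (simp add: mult_ac)
  finally show ?thesis .
qed

lemma binomial_prob_Suc_ratio:
  assumes "x < k"
  shows "binomial_prob k p (Suc x) * real (Suc x) * (1 - p) = binomial_prob k p x * real (k - x) * p"
proof -
  have c: "real (Suc x) * real (k choose Suc x) = real (k - x) * real (k choose x)"
    using binomial_absorption[of x k] binomial_absorb_comp[of k x] by (metis of_nat_mult)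
  have e: "(1 - p) ^ (k - x) = (1 - p) * (1 - p) ^ (k - Suc x)"
    using assms by (metis Suc_diff_Suc power_Suc)
  have "binomial_prob k p (Suc x) * real (Suc x) * (1 - p)
      = (real (Suc x) * real (k choose Suc x)) * p * (p ^ x * ((1 - p) * (1 - p) ^ (k - Suc x)))"
    unfolding binomial_prob_def by (simp add: mult_ac)
  also have "\<dots> = binomial_prob k p x * real (k - x) * p"
    unfolding c binomial_prob_def e by (simp add: mult_ac)
  finally show ?thesis .
qed

text \<open>\<open>binomial_div k p w\<close> is the mass of \<open>w\<close> on \<open>{0..k}\<close> times the relative entropy of its
  normalisation from Binomial\<open>(k, p)\<close>.\<close>
definition binomial_div :: "nat \<Rightarrow> real \<Rightarrow> (nat \<Rightarrow> real) \<Rightarrow> real" where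
  "binomial_div k p w = (\<Sum>x\<le>k. w x * ln (w x / ((\<Sum>y\<le>k. w y) * binomial_prob k p x)))"

definition binomial_energy :: "nat \<Rightarrow> real \<Rightarrow> (nat \<Rightarrow> real) \<Rightarrow> real" where
  "binomial_energy k p w = (\<Sum>t<k. bern_div p (real (k - t) * w t) (real (Suc t) * w (Suc t)))"

lemma sum_mult_ln_rescale:
  fixes a b :: "'a \<Rightarrow> real"
  assumes "finite T" and a: "\<And>t. t \<in> T \<Longrightarrow> a t \<ge> 0"
    and b: "\<And>t. t \<in> T \<Longrightarrow> a t > 0 \<Longrightarrow> b t > 0" and c: "(\<Sum>t\<in>T. a t) > 0 \<Longrightarrow> c > 0"
  shows "(\<Sum>t\<in>T. a t * ln (a t / (c * b t)))
    = (\<Sum>t\<in>T. a t * ln (a t / ((\<Sum>s\<in>T. a s) * b t))) + (\<Sum>t\<in>T. a t) * ln ((\<Sum>t\<in>T. a t) / c)"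
proof -
  define A where "A = (\<Sum>t\<in>T. a t)"
  have "a t * ln (a t / (c * b t)) = a t * ln (a t / (A * b t)) + a t * ln (A / c)" if "t \<in> T" for t
  proof (cases "a t = 0")
    case False
    then have at: "a t > 0" using a that by force
    have "a t \<le> A"
      unfolding A_def using a that \<open>finite T\<close> by (auto intro: member_le_sum)
    then have "A > 0" "c > 0" "b t > 0"
      using at b c that unfolding A_def by auto
    then have "ln (a t / (c * b t)) = ln (a t / (A * b t)) + ln (A / c)"
      using at by (simp add: ln_div ln_mult)
    then show ?thesis by (simp add: distrib_left)
  qed simp
  then have "(\<Sum>t\<in>T. a t * ln (a t / (c * b t)))
      = (\<Sum>t\<in>T. a t * ln (a t / (A * b t))) + (\<Sum>t\<in>T. a t) * ln (A / c)"
    by (simp add: sum.distrib sum_distrib_right)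
  then show ?thesis
    unfolding A_def .
qed

lemma sum_atMost_Suc_mult_split:
  fixes w f :: "nat \<Rightarrow> real"
  shows "(\<Sum>x\<le>Suc k. real (Suc k) * w x * f x)
    = (\<Sum>t\<le>k. real (Suc k - t) * w t * f t) + (\<Sum>t\<le>k. real (Suc t) * w (Suc t) * f (Suc t))"
proof -
  have "(\<Sum>x\<le>Suc k. real (Suc k) * w x * f x) = (\<Sum>x\<le>Suc k. real (Suc k - x) * w x * f x + real x * w x * f x)"
    by (intro sum.cong refl) (simp add: of_nat_diff algebra_simps)
  also have "\<dots> = (\<Sum>x\<le>Suc k. real (Suc k - x) * w x * f x) + (\<Sum>x\<le>Suc k. real x * w x * f x)"
    by (rule sum.distrib)
  also have "(\<Sum>x\<le>Suc k. real (Suc k - x) * w x * f x) = (\<Sum>t\<le>k. real (Suc k - t) * w t * f t)"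
    by simp
  also have "(\<Sum>x\<le>Suc k. real x * w x * f x) = (\<Sum>t\<le>k. real (Suc t) * w (Suc t) * f (Suc t))"
    unfolding sum.atMost_Suc_shift by simp
  finally show ?thesis .
qed

lemma binomial_div_Suc_eq_sum:
  fixes k :: nat and w :: "nat \<Rightarrow> real"
  defines "\<alpha> \<equiv> \<lambda>t. real (Suc k - t) * w t" and "\<beta> \<equiv> \<lambda>t. real (Suc t) * w (Suc t)"
    and "M \<equiv> \<Sum>x\<le>Suc k. w x"
  shows "real (Suc k) * binomial_div (Suc k) p w
    = (\<Sum>t\<le>k. \<alpha> t * ln (\<alpha> t / ((real (Suc k) * (1 - p) * M) * binomial_prob k p t)))
      + (\<Sum>t\<le>k. \<beta> t * ln (\<beta> t / ((real (Suc k) * p * M) * binomial_prob k p t)))"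
proof -
  define L where "L x = ln (w x / (M * binomial_prob (Suc k) p x))" for x
  have L\<alpha>: "L t = ln (\<alpha> t / ((real (Suc k) * (1 - p) * M) * binomial_prob k p t))" if "t \<le> k" for t
  proof -
    have "real (Suc k - t) \<noteq> 0"
      using that by simp
    then have "w t / (M * binomial_prob (Suc k) p t) = \<alpha> t / (M * (real (Suc k - t) * binomial_prob (Suc k) p t))"
      unfolding \<alpha>_def by (simp add: mult.left_commute[of M])
    then show ?thesis
      unfolding L_def binomial_prob_Suc_fail[OF that] by (simp add: mult_ac)
  qed
  have L\<beta>: "L (Suc t) = ln (\<beta> t / ((real (Suc k) * p * M) * binomial_prob k p t))" for t
  proof -
    have "w (Suc t) / (M * binomial_prob (Suc k) p (Suc t))
        = \<beta> t / (M * (real (Suc t) * binomial_prob (Suc k) p (Suc t)))"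
      unfolding \<beta>_def by (simp add: mult.left_commute[of M])
    then show ?thesis
      unfolding L_def binomial_prob_Suc_success by (simp add: mult_ac)
  qed
  have "real (Suc k) * binomial_div (Suc k) p w = (\<Sum>x\<le>Suc k. real (Suc k) * w x * L x)"
    unfolding binomial_div_def L_def M_def by (simp only: sum_distrib_left mult.assoc)
  also have "\<dots> = (\<Sum>t\<le>k. \<alpha> t * L t) + (\<Sum>t\<le>k. \<beta> t * L (Suc t))"
    unfolding sum_atMost_Suc_mult_split \<alpha>_def \<beta>_def by simp
  also have "\<dots> = (\<Sum>t\<le>k. \<alpha> t * ln (\<alpha> t / ((real (Suc k) * (1 - p) * M) * binomial_prob k p t)))
      + (\<Sum>t\<le>k. \<beta> t * ln (\<beta> t / ((real (Suc k) * p * M) * binomial_prob k p t)))"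
    by (intro arg_cong2[where f = "(+)"] sum.cong refl) (simp_all add: L\<alpha> L\<beta>)
  finally show ?thesis .
qed

text \<open>Chain rule. If \<open>w\<close> is the law of the sum of an exchangeable vector in \<open>{0,1}\<^sup>k\<^sup>+\<^sup>1\<close>, then
  \<open>\<alpha> t / (k + 1)\<close> and \<open>\<beta> t / (k + 1)\<close> are the probabilities that a uniformly chosen coordinate
  is 0 resp. 1 and the other \<open>k\<close> coordinates sum to \<open>t\<close>.\<close>
lemma binomial_div_Suc:
  fixes k :: nat and w :: "nat \<Rightarrow> real"
  assumes p: "0 < p" "p < 1" and w: "\<And>x. w x \<ge> 0"
  defines "\<alpha> \<equiv> \<lambda>t. real (Suc k - t) * w t" and "\<beta> \<equiv> \<lambda>t. real (Suc t) * w (Suc t)"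
  shows "real (Suc k) * binomial_div (Suc k) p w
       = bern_div p (\<Sum>t\<le>k. \<alpha> t) (\<Sum>t\<le>k. \<beta> t) + binomial_div k p \<alpha> + binomial_div k p \<beta>"
proof -
  define M where "M = (\<Sum>x\<le>Suc k. w x)"
  define A B where "A = (\<Sum>t\<le>k. \<alpha> t)" and "B = (\<Sum>t\<le>k. \<beta> t)"
  have \<alpha>0: "\<alpha> t \<ge> 0" and \<beta>0: "\<beta> t \<ge> 0" for t
    using w unfolding \<alpha>_def \<beta>_def by simp_all
  have AB: "A + B = real (Suc k) * M"
    using sum_atMost_Suc_mult_split[of k w "\<lambda>_. 1"]
    unfolding A_def B_def M_def \<alpha>_def \<beta>_def sum_distrib_left by simp
  have "A \<ge> 0" "B \<ge> 0"
    unfolding A_def B_def using \<alpha>0 \<beta>0 by (simp_all add: sum_nonneg)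
  then have M: "M > 0" if "A > 0 \<or> B > 0"
  proof -
    have "0 < real (Suc k) * M"
      using AB that \<open>A \<ge> 0\<close> \<open>B \<ge> 0\<close> by linarith
    then show ?thesis
      by (simp add: zero_less_mult_iff)
  qed
  have rescale\<alpha>: "(\<Sum>t\<le>k. \<alpha> t * ln (\<alpha> t / ((real (Suc k) * (1 - p) * M) * binomial_prob k p t)))
      = binomial_div k p \<alpha> + A * ln (A / (real (Suc k) * (1 - p) * M))"
    unfolding binomial_div_def A_def using p \<alpha>0 M[unfolded A_def]
    by (intro sum_mult_ln_rescale) (auto intro: binomial_prob_pos intro!: mult_pos_pos)
  have rescale\<beta>: "(\<Sum>t\<le>k. \<beta> t * ln (\<beta> t / ((real (Suc k) * p * M) * binomial_prob k p t)))
      = binomial_div k p \<beta> + B * ln (B / (real (Suc k) * p * M))"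
    unfolding binomial_div_def B_def using p \<beta>0 M[unfolded B_def]
    by (intro sum_mult_ln_rescale) (auto intro: binomial_prob_pos intro!: mult_pos_pos)
  have "real (Suc k) * binomial_div (Suc k) p w
      = (\<Sum>t\<le>k. \<alpha> t * ln (\<alpha> t / ((real (Suc k) * (1 - p) * M) * binomial_prob k p t)))
        + (\<Sum>t\<le>k. \<beta> t * ln (\<beta> t / ((real (Suc k) * p * M) * binomial_prob k p t)))"
    unfolding \<alpha>_def \<beta>_def M_def by (rule binomial_div_Suc_eq_sum)
  also have "\<dots> = bern_div p A B + binomial_div k p \<alpha> + binomial_div k p \<beta>"
    unfolding rescale\<alpha> rescale\<beta> bern_div_def AB by (simp add: mult_ac)
  finally show ?thesis
    unfolding A_def B_def .
qed

lemma binomial_energy_split: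
  fixes k :: nat and w :: "nat \<Rightarrow> real"
  defines "\<alpha> \<equiv> \<lambda>t. real (Suc k - t) * w t" and "\<beta> \<equiv> \<lambda>t. real (Suc t) * w (Suc t)"
  shows "binomial_energy k p \<alpha> + binomial_energy k p \<beta> = real k * binomial_energy (Suc k) p w"
proof -
  define f where "f t = bern_div p (\<alpha> t) (\<beta> t)" for t
  have "binomial_energy k p \<alpha> = (\<Sum>t<k. real (k - t) * f t)"
  proof -
    have shift: "real (Suc t) * \<alpha> (Suc t) = real (k - t) * \<beta> t" for t
      unfolding \<alpha>_def \<beta>_def by simp
    show ?thesis
      unfolding binomial_energy_def f_def
      by (intro sum.cong refl) (simp only: shift, rule bern_div_scale, simp)
  qed
  moreover have "binomial_energy k p \<beta> = (\<Sum>t<k. real (Suc t) * f (Suc t))"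
  proof -
    have shift: "real (k - t) * \<beta> t = real (Suc t) * \<alpha> (Suc t)" for t
      unfolding \<alpha>_def \<beta>_def by simp
    show ?thesis
      unfolding binomial_energy_def f_def
      by (intro sum.cong refl) (simp only: shift, rule bern_div_scale, simp)
  qed
  moreover have "real k * (\<Sum>t<Suc k. f t) = (\<Sum>t<Suc k. real (k - t) * f t) + (\<Sum>t<Suc k. real t * f t)"
    by (simp add: sum_distrib_left sum.distrib[symmetric] of_nat_diff algebra_simps)
  moreover have "(\<Sum>t<Suc k. real t * f t) = (\<Sum>t<k. real (Suc t) * f (Suc t))"
    unfolding sum.lessThan_Suc_shift by simp
  moreover have "binomial_energy (Suc k) p w = (\<Sum>t<Suc k. f t)"
    unfolding binomial_energy_def f_def \<alpha>_def \<beta>_def ..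
  ultimately show ?thesis by simp
qed

lemma binomial_div_le_energy:
  assumes p: "0 < p" "p < 1" and "\<And>x. w x \<ge> 0"
  shows "binomial_div k p w \<le> binomial_energy k p w"
  using assms(3)
proof (induction k arbitrary: w)
  case 0
  show ?case
    unfolding binomial_div_def binomial_energy_def binomial_prob_def by simp
next
  case (Suc k)
  define \<alpha> where "\<alpha> t = real (Suc k - t) * w t" for t
  define \<beta> where "\<beta> t = real (Suc t) * w (Suc t)" for t
  have "\<alpha> t \<ge> 0" "\<beta> t \<ge> 0" for t
    using Suc.prems unfolding \<alpha>_def \<beta>_def by simp_all
  have "real (Suc k) * binomial_div (Suc k) p w
      = bern_div p (\<Sum>t\<le>k. \<alpha> t) (\<Sum>t\<le>k. \<beta> t) + binomial_div k p \<alpha> + binomial_div k p \<beta>"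
    unfolding \<alpha>_def \<beta>_def by (rule binomial_div_Suc[OF p Suc.prems])
  also have "\<dots> \<le> (\<Sum>t\<le>k. bern_div p (\<alpha> t) (\<beta> t)) + binomial_energy k p \<alpha> + binomial_energy k p \<beta>"
    using \<open>\<alpha> _ \<ge> 0\<close> \<open>\<beta> _ \<ge> 0\<close> by (intro add_mono bern_div_sum_le p Suc.IH) auto
  also have "\<dots> = real (Suc k) * binomial_energy (Suc k) p w"
  proof -
    have "(\<Sum>t\<le>k. bern_div p (\<alpha> t) (\<beta> t)) = binomial_energy (Suc k) p w"
      unfolding binomial_energy_def \<alpha>_def \<beta>_def lessThan_Suc_atMost ..
    moreover have "binomial_energy k p \<alpha> + binomial_energy k p \<beta> = real k * binomial_energy (Suc k) p w"
      unfolding \<alpha>_def \<beta>_def by (rule binomial_energy_split)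
    ultimately show ?thesis
      by (simp add: algebra_simps)
  qed
  finally show ?case by simp
qed

lemma binomial_div_eq_sum_support:
  assumes "m \<le> k" and w_above: "\<And>x. m < x \<Longrightarrow> w x = 0" and w1: "(\<Sum>x\<le>m. w x) = 1"
  shows "binomial_div k p w = (\<Sum>x\<le>m. w x * ln (w x / binomial_prob k p x))"
proof -
  have restrict: "(\<Sum>x\<le>k. f x) = (\<Sum>x\<le>m. f x)" if "\<And>x. m < x \<Longrightarrow> f x = 0" for f :: "nat \<Rightarrow> real"
    using \<open>m \<le> k\<close> that by (intro sum.mono_neutral_right) auto
  show ?thesis
    unfolding binomial_div_def using w1 by (simp add: restrict w_above)
qed

lemma binomial_div_le_chi_square:
  assumes p: "0 < p" "p < 1" and w: "\<And>x. w x \<ge> 0"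
  shows "binomial_div k p w \<le> (\<Sum>t<k. (real (Suc t) * w (Suc t) * (1 - p) - real (k - t) * w t * p)^2
      / ((real (k - t) * w t + real (Suc t) * w (Suc t)) * p * (1 - p)))"
proof -
  have "binomial_div k p w \<le> binomial_energy k p w"
    using p w by (rule binomial_div_le_energy)
  also have "\<dots> \<le> (\<Sum>t<k. (real (Suc t) * w (Suc t) * (1 - p) - real (k - t) * w t * p)^2
      / ((real (k - t) * w t + real (Suc t) * w (Suc t)) * p * (1 - p)))"
    unfolding binomial_energy_def using p w by (intro sum_mono bern_div_le_chi_square) auto
  finally show ?thesis .
qed

section \<open>Log-Sobolev inequality for the Poisson law\<close>

lemma eventually_sequentially_gt_real:
  "eventually (\<lambda>k. m < k \<and> c < real k) sequentially"
proof -
  have "eventually (\<lambda>k. c < real k) sequentially"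
    using filterlim_real_sequentially by (simp add: filterlim_at_top_dense)
  then show ?thesis
    using eventually_gt_at_top eventually_conj by blast
qed

lemma binomial_prob_tendsto_poisson:
  assumes l: "l > 0"
  shows "(\<lambda>k. binomial_prob k (l / real k) x) \<longlonglongrightarrow> pmf (poisson_pmf l) x"
proof (induction x)
  case 0
  have "binomial_prob k (l / real k) 0 = (1 + (-l) / real k) ^ k" for k
    unfolding binomial_prob_def by simp
  then show ?case
    using tendsto_exp_limit_sequentially[of "-l"] l by simp
next
  case (Suc x)
  define r where "r k = (1 - real x * (1 / real k)) * l / ((1 - l * (1 / real k)) * real (Suc x))" for k :: nat
  have "eventually (\<lambda>k. binomial_prob k (l / real k) x * r k = binomial_prob k (l / real k) (Suc x)) sequentially"
    using eventually_sequentially_gt_real[of x l]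
  proof (rule eventually_mono, elim conjE)
    fix k assume xk: "x < k" and lk: "l < real k"
    define p where "p = l / real k"
    have "(1 - p) * real (Suc x) \<noteq> 0"
      using lk l unfolding p_def by simp
    then have "binomial_prob k p (Suc x) = binomial_prob k p x * (real (k - x) * p) / ((1 - p) * real (Suc x))"
      using binomial_prob_Suc_ratio[OF xk, of p] by (simp add: field_simps)
    moreover have "real (k - x) * p = (1 - real x * (1 / real k)) * l" "1 - p = 1 - l * (1 / real k)"
      using xk unfolding p_def by (simp_all add: of_nat_diff field_simps)
    ultimately show "binomial_prob k (l / real k) x * r k = binomial_prob k (l / real k) (Suc x)"
      unfolding r_def p_def[symmetric] by (simp only: times_divide_eq_right)
  qed
  moreover have "(\<lambda>k. binomial_prob k (l / real k) x * r k)
      \<longlonglongrightarrow> pmf (poisson_pmf l) x * ((1 - real x * 0) * l / ((1 - l * 0) * real (Suc x)))"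
    unfolding r_def by (intro tendsto_intros Suc.IH lim_inverse_n') auto
  moreover have "pmf (poisson_pmf l) x * ((1 - real x * 0) * l / ((1 - l * 0) * real (Suc x)))
      = pmf (poisson_pmf l) (Suc x)"
    using l by (simp add: field_simps)
  ultimately show ?case
    using Lim_transform_eventually by fastforce
qed

definition poisson_score :: "real \<Rightarrow> (nat \<Rightarrow> real) \<Rightarrow> nat \<Rightarrow> real" where
  "poisson_score l w x = real (Suc x) * w (Suc x) - l * w x"

text \<open>\<open>scaled_fisher \<lambda> m w\<close> is \<open>\<lambda>\<close> times the scaled Fisher information \<open>\<lambda> E[\<rho>(X)\<^sup>2]\<close> of a law \<open>w\<close>
  on \<open>{0..m}\<close>, where \<open>\<rho>(x) = (x + 1) w(x + 1) / (\<lambda> w(x)) - 1 = poisson_score \<lambda> w x / (\<lambda> w(x))\<close>;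
  the extra factor \<open>\<lambda>\<close> keeps it meaningful for \<open>\<lambda> = 0\<close>.\<close>
definition scaled_fisher :: "real \<Rightarrow> nat \<Rightarrow> (nat \<Rightarrow> real) \<Rightarrow> real" where
  "scaled_fisher l m w = (\<Sum>t\<le>m. (poisson_score l w t)^2 / w t)"

lemma rel_entropy_eq_sum:
  assumes "finite A" and supp: "set_pmf P \<subseteq> A" and Q: "\<And>x. x \<in> A \<Longrightarrow> pmf Q x > 0"
  shows "rel_entropy P Q = ereal (\<Sum>x\<in>A. pmf P x * ln (pmf P x / pmf Q x))"
proof -
  have "pmf Q x > 0" if "pmf P x > 0" for x
    using that by (intro Q subsetD[OF supp]) (simp add: set_pmf_iff)
  then have "\<not> (\<exists>x. pmf P x > 0 \<and> pmf Q x = 0)"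
    by force
  moreover have "finite (set_pmf P)"
    using supp \<open>finite A\<close> by (rule finite_subset)
  moreover have "(\<Sum>x\<in>set_pmf P. pmf P x * ln (pmf P x / pmf Q x)) = (\<Sum>x\<in>A. pmf P x * ln (pmf P x / pmf Q x))"
    using supp \<open>finite A\<close> by (intro sum.mono_neutral_left) (auto simp: set_pmf_iff)
  ultimately show ?thesis
    unfolding rel_entropy_def by simp
qed

text \<open>The bound of \<open>binomial_div_le_chi_square\<close> for \<open>p = \<lambda> e\<close>, written as a function of \<open>e = 1 / k\<close>.\<close>
definition poisson_chi_term :: "real \<Rightarrow> (nat \<Rightarrow> real) \<Rightarrow> real \<Rightarrow> nat \<Rightarrow> real" where
  "poisson_chi_term l w e t = (real (Suc t) * w (Suc t) * (1 - l * e) - (1 - real t * e) * l * w t)^2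
      / (((1 - real t * e) * l * w t + real (Suc t) * w (Suc t) * l * e) * (1 - l * e))"

lemma binomial_div_le_poisson_chi_term:
  assumes l: "0 < l" "l < real k" and "m < k"
    and w: "\<And>x. w x \<ge> 0" and w_above: "\<And>x. m < x \<Longrightarrow> w x = 0"
  shows "binomial_div k (l / real k) w \<le> (\<Sum>t\<le>m. poisson_chi_term l w (1 / real k) t)"
proof -
  define p where "p = l / real k"
  have p: "0 < p" "p < 1"
    using l unfolding p_def by auto
  have "binomial_div k p w \<le> (\<Sum>t<k. (real (Suc t) * w (Suc t) * (1 - p) - real (k - t) * w t * p)^2
      / ((real (k - t) * w t + real (Suc t) * w (Suc t)) * p * (1 - p)))"
    using p w by (rule binomial_div_le_chi_square)
  also have "\<dots> = (\<Sum>t\<le>m. (real (Suc t) * w (Suc t) * (1 - p) - real (k - t) * w t * p)^2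
      / ((real (k - t) * w t + real (Suc t) * w (Suc t)) * p * (1 - p)))"
    using \<open>m < k\<close> by (intro sum.mono_neutral_right) (auto simp: w_above)
  also have "\<dots> = (\<Sum>t\<le>m. poisson_chi_term l w (1 / real k) t)"
  proof (intro sum.cong refl)
    fix t assume "t \<in> {..m}"
    then have "t \<le> k"
      using \<open>m < k\<close> by simp
    then have eqs: "real (k - t) * w t * p = (1 - real t * (1 / real k)) * l * w t"
      "(real (k - t) * w t + real (Suc t) * w (Suc t)) * p
        = (1 - real t * (1 / real k)) * l * w t + real (Suc t) * w (Suc t) * l * (1 / real k)"
      "1 - p = 1 - l * (1 / real k)"
      using l unfolding p_def by (simp_all add: of_nat_diff field_simps)
    show "(real (Suc t) * w (Suc t) * (1 - p) - real (k - t) * w t * p)^2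
        / ((real (k - t) * w t + real (Suc t) * w (Suc t)) * p * (1 - p))
        = poisson_chi_term l w (1 / real k) t"
      unfolding poisson_chi_term_def by (simp only: eqs)
  qed
  finally show ?thesis
    unfolding p_def .
qed

lemma poisson_chi_term_tendsto:
  assumes l: "l > 0" and "w t \<ge> 0" and no_gap: "w t = 0 \<Longrightarrow> w (Suc t) = 0"
  shows "(\<lambda>k. poisson_chi_term l w (1 / real k) t) \<longlonglongrightarrow> (poisson_score l w t)^2 / w t / l"
proof (cases "w t = 0")
  case True
  then show ?thesis
    using no_gap unfolding poisson_chi_term_def poisson_score_def by simp
next
  case False
  then have "(\<lambda>k. poisson_chi_term l w (1 / real k) t) \<longlonglongrightarrow> poisson_chi_term l w 0 t"
    unfolding poisson_chi_term_def using \<open>w t \<ge> 0\<close> l by (intro tendsto_intros lim_inverse_n') auto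
  then show ?thesis
    unfolding poisson_chi_term_def poisson_score_def by (simp add: mult.commute)
qed

lemma poisson_log_sobolev:
  fixes P :: "nat pmf"
  assumes l: "l > 0" and supp: "set_pmf P \<subseteq> {..m}"
    and no_gap: "\<And>x. pmf P x = 0 \<Longrightarrow> pmf P (Suc x) = 0"
      \<comment> \<open>otherwise the right-hand side should be infinite, but \<open>x / 0 = 0\<close> makes it finite\<close>
  shows "rel_entropy P (poisson_pmf l) \<le> ereal (scaled_fisher l m (pmf P) / l)"
proof -
  define w where "w = pmf P"
  have w_above: "w x = 0" if "m < x" for x
    using supp that unfolding w_def by (auto simp: set_pmf_iff)
  have "eventually (\<lambda>k. (\<Sum>x\<le>m. w x * ln (w x / binomial_prob k (l / real k) x))
      \<le> (\<Sum>t\<le>m. poisson_chi_term l w (1 / real k) t)) sequentially"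
    using eventually_sequentially_gt_real[of m l]
  proof (rule eventually_mono, elim conjE)
    fix k assume mk: "m < k" and lk: "l < real k"
    have "(\<Sum>x\<le>m. w x * ln (w x / binomial_prob k (l / real k) x)) = binomial_div k (l / real k) w"
      using supp mk w_above unfolding w_def by (intro binomial_div_eq_sum_support[symmetric] sum_pmf_eq_1) auto
    also have "\<dots> \<le> (\<Sum>t\<le>m. poisson_chi_term l w (1 / real k) t)"
      using l lk mk w_above unfolding w_def by (intro binomial_div_le_poisson_chi_term) auto
    finally show "(\<Sum>x\<le>m. w x * ln (w x / binomial_prob k (l / real k) x))
        \<le> (\<Sum>t\<le>m. poisson_chi_term l w (1 / real k) t)" .
  qed
  moreover have "(\<lambda>k. \<Sum>x\<le>m. w x * ln (w x / binomial_prob k (l / real k) x))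
      \<longlonglongrightarrow> (\<Sum>x\<le>m. w x * ln (w x / pmf (poisson_pmf l) x))"
  proof (intro tendsto_sum)
    fix x
    show "(\<lambda>k. w x * ln (w x / binomial_prob k (l / real k) x)) \<longlonglongrightarrow> w x * ln (w x / pmf (poisson_pmf l) x)"
    proof (cases "w x = 0")
      case False
      moreover have "w x \<ge> 0"
        unfolding w_def by simp
      ultimately show ?thesis
        using l by (intro tendsto_intros binomial_prob_tendsto_poisson) auto
    qed simp
  qed
  moreover have "(\<lambda>k. \<Sum>t\<le>m. poisson_chi_term l w (1 / real k) t) \<longlonglongrightarrow> scaled_fisher l m w / l"
    unfolding scaled_fisher_def sum_divide_distrib
    using l no_gap unfolding w_def by (intro tendsto_sum poisson_chi_term_tendsto) auto
  ultimately have "(\<Sum>x\<le>m. w x * ln (w x / pmf (poisson_pmf l) x)) \<le> scaled_fisher l m w / l"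
    by (intro tendsto_le[OF trivial_limit_sequentially]) auto
  moreover have "rel_entropy P (poisson_pmf l) = ereal (\<Sum>x\<le>m. w x * ln (w x / pmf (poisson_pmf l) x))"
    unfolding w_def using supp l by (intro rel_entropy_eq_sum) auto
  ultimately show ?thesis
    unfolding w_def by simp
qed

section \<open>Scaled Fisher information of Bernoulli sums\<close>

lemma bernoulli_sum_pmf_Suc:
  "bernoulli_sum_pmf (Suc k) p =
     bind_pmf (bernoulli_pmf (p k)) (\<lambda>b. map_pmf (\<lambda>s. of_bool b + s) (bernoulli_sum_pmf k p))"
proof -
  define P where "P = (\<lambda>i. bernoulli_pmf (p i))"
  have Pi: "Pi_pmf {..<Suc k} False P = do {b \<leftarrow> P k; f \<leftarrow> Pi_pmf {..<k} False P; return_pmf (f(k := b))}"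
    unfolding lessThan_Suc by (rule Pi_pmf_insert') auto
  have upd: "(\<Sum>i<Suc k. of_bool ((f(k := b)) i)) = of_bool b + (\<Sum>i<k. of_bool (f i))" for f and b :: bool
    by (simp add: add.commute)
  show ?thesis
    unfolding bernoulli_sum_pmf_def P_def[symmetric] Pi
    by (simp only: map_bind_pmf map_return_pmf upd map_pmf_comp map_pmf_def[of "\<lambda>f. of_bool _ + (\<Sum>i<k. of_bool (f i))"] P_def)
qed

lemma pmf_bernoulli_sum_pmf_Suc:
  assumes "0 \<le> p k" "p k \<le> 1"
  shows "pmf (bernoulli_sum_pmf (Suc k) p) x
    = (1 - p k) * pmf (bernoulli_sum_pmf k p) x + (case x of 0 \<Rightarrow> 0 | Suc y \<Rightarrow> p k * pmf (bernoulli_sum_pmf k p) y)"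
proof -
  define S where "S = bernoulli_sum_pmf k p"
  have "pmf (bernoulli_sum_pmf (Suc k) p) x
      = pmf (map_pmf (\<lambda>s. of_bool True + s) S) x * p k + pmf (map_pmf (\<lambda>s. of_bool False + s) S) x * (1 - p k)"
    unfolding bernoulli_sum_pmf_Suc pmf_bind S_def by (rule integral_bernoulli_pmf) (use assms in auto)
  also have "pmf (map_pmf (\<lambda>s. of_bool True + s) S) x = (case x of 0 \<Rightarrow> 0 | Suc y \<Rightarrow> pmf S y)"
  proof (cases x)
    case 0
    then show ?thesis by (intro trans[OF pmf_map_outside]) auto
  next
    case (Suc y)
    have "pmf (map_pmf Suc S) (Suc y) = pmf S y"
      by (rule pmf_map_inj') (simp add: inj_def)
    then show ?thesis using Suc by simp
  qed
  also have "map_pmf (\<lambda>s. of_bool False + s) S = S"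
    by (simp add: pmf.map_id0[unfolded id_def])
  finally show ?thesis
    unfolding S_def by (simp split: nat.split)
qed

lemma set_pmf_bernoulli_sum_pmf: "set_pmf (bernoulli_sum_pmf k p) \<subseteq> {..k}"
proof -
  have "(\<Sum>i<k. of_bool (X i)) \<le> k" for X :: "nat \<Rightarrow> bool"
    using sum_bounded_above[of "{..<k}" "\<lambda>i. of_bool (X i) :: nat" 1] by simp
  then show ?thesis
    unfolding bernoulli_sum_pmf_def by auto
qed

lemma pmf_bernoulli_sum_pmf_eq_0: "k < x \<Longrightarrow> pmf (bernoulli_sum_pmf k p) x = 0"
  using set_pmf_bernoulli_sum_pmf[of k p] by (auto simp: set_pmf_iff)

lemma pmf_bernoulli_sum_pmf_Suc_eq_0:
  assumes p: "\<And>i. i < k \<Longrightarrow> 0 \<le> p i \<and> p i < 1" and "pmf (bernoulli_sum_pmf k p) x = 0"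
  shows "pmf (bernoulli_sum_pmf k p) (Suc x) = 0"
  using assms
proof (induction k arbitrary: x)
  case 0
  then show ?case
    by (simp add: pmf_bernoulli_sum_pmf_eq_0)
next
  case (Suc k)
  have pk: "0 \<le> p k" "p k < 1"
    using Suc.prems(1) by auto
  let ?Q = "pmf (bernoulli_sum_pmf k p)"
  have "(1 - p k) * ?Q x + (case x of 0 \<Rightarrow> 0 | Suc y \<Rightarrow> p k * ?Q y) = 0"
    using Suc.prems(2) pk by (simp add: pmf_bernoulli_sum_pmf_Suc)
  moreover have "(case x of 0 \<Rightarrow> 0 | Suc y \<Rightarrow> p k * ?Q y) \<ge> 0" "(1 - p k) * ?Q x \<ge> 0"
    using pk by (simp_all split: nat.split)
  ultimately have "(1 - p k) * ?Q x = 0"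
    by linarith
  then have "?Q x = 0"
    using pk by simp
  moreover have "?Q (Suc x) = 0"
    using Suc.IH[of x] Suc.prems(1) \<open>?Q x = 0\<close> by simp
  ultimately show ?case
    using pk by (simp add: pmf_bernoulli_sum_pmf_Suc)
qed

lemma power2_add_divide_le:
  fixes c d A B :: real
  assumes "A \<ge> 0" "B \<ge> 0" "A = 0 \<Longrightarrow> c = 0" "B = 0 \<Longrightarrow> d = 0"
  shows "(c + d)^2 / (A + B) \<le> c^2 / A + d^2 / B"
proof (cases "A = 0 \<or> B = 0")
  case True
  then show ?thesis using assms by auto
next
  case False
  then have A: "A > 0" and B: "B > 0" using assms by auto
  have "(c^2 / A + d^2 / B) * (A + B) - (c + d)^2 = (B * c - A * d)^2 / (A * B)"
    using A B by (simp add: field_simps power2_eq_square)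
  moreover have "(B * c - A * d)^2 / (A * B) \<ge> 0"
    using A B by simp
  ultimately have "(c + d)^2 \<le> (c^2 / A + d^2 / B) * (A + B)"
    by linarith
  then show ?thesis
    using A B by (simp add: pos_divide_le_eq)
qed

lemma bernoulli_split_square_eq:
  fixes a N Q :: real
  assumes "0 \<le> a" "a < 1" "Q = 0 \<Longrightarrow> N = 0"
  shows "((1 - a) * N + a^2 * Q)^2 / ((1 - a) * Q) + (a * N - a^2 * Q)^2 / (a * Q) = N^2 / Q + a^3 / (1 - a) * Q"
proof (cases "Q = 0 \<or> a = 0")
  case True
  then show ?thesis using assms by (auto simp: power2_eq_square)
next
  case False
  then show ?thesis using assms by (simp add: field_simps power2_eq_square power3_eq_cube)
qed

lemma poisson_score_convolve_bernoulli:
  fixes a :: real and Q :: "nat \<Rightarrow> real"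
  defines "Q' \<equiv> \<lambda>z. (1 - a) * Q z + (case z of 0 \<Rightarrow> 0 | Suc y \<Rightarrow> a * Q y)"
  shows "poisson_score (l + a) Q' z = ((1 - a) * poisson_score l Q z + a^2 * Q z)
    + (case z of 0 \<Rightarrow> 0 | Suc y \<Rightarrow> a * poisson_score l Q y - a^2 * Q y)"
  unfolding Q'_def poisson_score_def by (cases z) (simp_all add: algebra_simps power2_eq_square)

text \<open>Convolving with Bernoulli\<open>(a)\<close> splits the score into the contributions \<open>c\<close> and \<open>d\<close> of the two
  values of the new summand; Cauchy-Schwarz on this split costs exactly \<open>a\<^sup>3 / (1 - a)\<close>.\<close>
lemma scaled_fisher_convolve_bernoulli_le:
  fixes a :: real and Q :: "nat \<Rightarrow> real"
  assumes a: "0 \<le> a" "a < 1" and Q0: "\<And>z. Q z \<ge> 0" and no_gap: "\<And>z. Q z = 0 \<Longrightarrow> Q (Suc z) = 0"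
    and Q_above: "Q (Suc k) = 0" and Q1: "(\<Sum>z\<le>k. Q z) = 1"
  defines "Q' \<equiv> \<lambda>z. (1 - a) * Q z + (case z of 0 \<Rightarrow> 0 | Suc y \<Rightarrow> a * Q y)"
  shows "scaled_fisher (l + a) (Suc k) Q' \<le> scaled_fisher l k Q + a^3 / (1 - a)"
proof -
  define S where "S = poisson_score l Q"
  define c where "c z = (1 - a) * S z + a^2 * Q z" for z
  define d where "d z = a * S z - a^2 * Q z" for z
  have S0: "S z = 0" if "Q z = 0" for z
    using that no_gap[OF that] unfolding S_def poisson_score_def by simp
  have term_le: "(poisson_score (l + a) Q' z)^2 / Q' z
      \<le> (c z)^2 / ((1 - a) * Q z) + (case z of 0 \<Rightarrow> 0 | Suc y \<Rightarrow> (d y)^2 / (a * Q y))" for z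
  proof (cases z)
    case 0
    then show ?thesis
      unfolding poisson_score_convolve_bernoulli Q'_def c_def S_def by simp
  next
    case (Suc y)
    have "(c z + d y)^2 / ((1 - a) * Q z + a * Q y) \<le> (c z)^2 / ((1 - a) * Q z) + (d y)^2 / (a * Q y)"
      using a Q0 S0 unfolding c_def d_def by (intro power2_add_divide_le) auto
    then show ?thesis
      unfolding poisson_score_convolve_bernoulli Q'_def c_def d_def S_def Suc by simp
  qed
  have "scaled_fisher (l + a) (Suc k) Q'
      \<le> (\<Sum>z\<le>Suc k. (c z)^2 / ((1 - a) * Q z) + (case z of 0 \<Rightarrow> 0 | Suc y \<Rightarrow> (d y)^2 / (a * Q y)))"
    unfolding scaled_fisher_def by (intro sum_mono term_le)
  also have "\<dots> = (\<Sum>z\<le>Suc k. (c z)^2 / ((1 - a) * Q z)) + (\<Sum>z\<le>k. (d z)^2 / (a * Q z))"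
    unfolding sum.distrib sum.atMost_Suc_shift[of "\<lambda>z. case z of 0 \<Rightarrow> 0 | Suc y \<Rightarrow> _ y"] by simp
  also have "\<dots> = (\<Sum>z\<le>k. (c z)^2 / ((1 - a) * Q z) + (d z)^2 / (a * Q z))"
    using Q_above by (simp add: sum.distrib)
  also have "\<dots> = (\<Sum>z\<le>k. (S z)^2 / Q z + a^3 / (1 - a) * Q z)"
    unfolding c_def d_def using a S0 by (intro sum.cong refl bernoulli_split_square_eq) auto
  also have "\<dots> = scaled_fisher l k Q + a^3 / (1 - a)"
    unfolding scaled_fisher_def S_def sum.distrib sum_distrib_left[symmetric] Q1 by simp
  finally show ?thesis .
qed

lemma scaled_fisher_bernoulli_sum_le:
  assumes "\<And>i. i < n \<Longrightarrow> 0 \<le> p i \<and> p i < 1"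
  shows "scaled_fisher (\<Sum>i<n. p i) n (pmf (bernoulli_sum_pmf n p)) \<le> (\<Sum>i<n. p i ^ 3 / (1 - p i))"
  using assms
proof (induction n)
  case 0
  then show ?case
    unfolding scaled_fisher_def poisson_score_def by (simp add: pmf_bernoulli_sum_pmf_eq_0)
next
  case (Suc n)
  let ?Q = "pmf (bernoulli_sum_pmf n p)"
  have p_n: "0 \<le> p n" "p n < 1"
    using Suc.prems by auto
  have conv: "pmf (bernoulli_sum_pmf (Suc n) p) = (\<lambda>z. (1 - p n) * ?Q z + (case z of 0 \<Rightarrow> 0 | Suc y \<Rightarrow> p n * ?Q y))"
    using p_n by (intro ext pmf_bernoulli_sum_pmf_Suc) auto
  have "scaled_fisher (\<Sum>i<Suc n. p i) (Suc n) (pmf (bernoulli_sum_pmf (Suc n) p))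
      \<le> scaled_fisher (\<Sum>i<n. p i) n ?Q + p n ^ 3 / (1 - p n)"
    unfolding sum.lessThan_Suc conv using p_n Suc.prems
    by (intro scaled_fisher_convolve_bernoulli_le)
      (auto simp: sum_pmf_eq_1[OF finite_atMost set_pmf_bernoulli_sum_pmf]
        intro: pmf_bernoulli_sum_pmf_eq_0 pmf_bernoulli_sum_pmf_Suc_eq_0)
  then show ?case
    using Suc by simp
qed

theorem theorem1:
  fixes n :: nat and p :: "nat \<Rightarrow> real"
  assumes "\<And>i. i < n \<Longrightarrow> 0 \<le> p i \<and> p i < 1"
    and "(\<Sum>i<n. p i) > 0"
  shows "rel_entropy (bernoulli_sum_pmf n p) (poisson_pmf (\<Sum>i<n. p i))
           \<le> ereal ((1 / (\<Sum>i<n. p i)) * (\<Sum>i<n. p i ^ 3 / (1 - p i)))"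
proof -
  have "rel_entropy (bernoulli_sum_pmf n p) (poisson_pmf (\<Sum>i<n. p i))
      \<le> ereal (scaled_fisher (\<Sum>i<n. p i) n (pmf (bernoulli_sum_pmf n p)) / (\<Sum>i<n. p i))"
    using assms by (intro poisson_log_sobolev set_pmf_bernoulli_sum_pmf pmf_bernoulli_sum_pmf_Suc_eq_0)
  also have "\<dots> \<le> ereal ((1 / (\<Sum>i<n. p i)) * (\<Sum>i<n. p i ^ 3 / (1 - p i)))"
    using scaled_fisher_bernoulli_sum_le[OF assms(1)] assms(2) by (simp add: divide_right_mono)
  finally show ?thesis .
qed

end
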